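(* If $\Gamma\vdash t:\tau$ and $t\to t'$, then $\Gamma\vdash t':\tau$.
   Context: Types: $\rho,\tau::=\Diamond\mid\mathbf{B}\mid\tau\multimap\rho\mid\tau\otimes\rho\mid\tau\times\rho\mid\mathbf{L}(\tau)$. Raw terms: $r,s,t::=x^\tau\mid c\mid\lambda x^\tau.\,t\mid\langle t,s\rangle\mid ts\mid\{t\}$, where each variable $x^\tau$ carries a type (infinitely many variables of each type), application associates to the left, terms are identified up to renaming of bound variables ($\lambda$ is the only binder), and the constants $c$ with their types are $\mathsf{tt},\mathsf{ff}:\mathbf{B}$; $\mathsf{nil}_\tau:\mathbf{L}(\tau)$; $\mathsf{cons}_\tau:\Diamond\multimap\tau\multimap\mathbf{L}(\tau)\multimap\mathbf{L}(\tau)$; $\otimes_{\tau,\rho}:\tau\multimap\rho\multimap\tau\otimes\rho$. A context is a finite set of typed variables; $\Gamma_1,\Gamma_2$ denotes $\Gamma_1\cup\Gamma_2$ and presupposes $\Gamma_1\cap\Gamma_2=\emptyset$; $x^\tau$ also denotes $\{x^\tau\}$. The relation $\Gamma\vdash t:\tau$ is inductively defined by: (Var) $\Gamma,x^\tau\vdash x:\tau$; (Const) $\Gamma\vdash c:\tau$ for a constant $c$ of type $\tau$; ($\multimap^+$) from $\Gamma\cup\{x^\tau\}\vdash t:\rho$ infer $\Gamma\vdash\lambda x^\tau.t:\tau\multimap\rho$; ($\multimap^-$) from $\Gamma_1\vdash t:\tau\multimap\rho$ and $\Gamma_2\vdash s:\tau$ infer $\Gamma_1,\Gamma_2\vdash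 ts:\rho$; ($\times^+$) from $\Gamma\vdash t:\tau$ and $\Gamma\vdash s:\rho$ infer $\Gamma\vdash\langle t,s\rangle:\tau\times\rho$; ($\times^-_1$) from $\Gamma\vdash t:\tau\times\rho$ infer $\Gamma\vdash t\,\mathsf{tt}:\tau$; ($\times^-_0$) from $\Gamma\vdash t:\tau\times\rho$ infer $\Gamma\vdash t\,\mathsf{ff}:\rho$; ($\mathbf{B}^-$) from $\Gamma_1\vdash t:\mathbf{B}$, $\Gamma_2\vdash s:\tau$, $\Gamma_2\vdash r:\tau$ infer $\Gamma_1,\Gamma_2\vdash t\langle s,r\rangle:\tau$; ($\otimes^-$) from $\Gamma_1\vdash t:\tau\otimes\rho$ and $\Gamma_2,x^\tau,y^\rho\vdash s:\sigma$ infer $\Gamma_1,\Gamma_2\vdash t(\lambda x^\tau.\lambda y^\rho.s):\sigma$; ($\mathbf{L}^-$) from $\Gamma\vdash t:\mathbf{L}(\tau)$ and $\emptyset\vdash s:\Diamond\multimap\tau\multimap\rho\multimap\rho$ infer $\Gamma\vdash t\{s\}:\rho\multimap\rho$. Lists: a list with $n$ entries ($n\ge0$) is a term $\mathsf{cons}_\tau d_1a_1(\mathsf{cons}_\tau d_2a_2(\cdots(\mathsf{cons}_\tau d_na_n\,\mathsf{nil}_\tau)\cdots))$ where the $d_i$ are arbitrary terms of type $\Diamond$ and the $a_i$ arbitrary terms of type $\tau$ (for $n=0$ this is $\mathsf{nil}_\tau$). Conversions $\mapsto$: $(\lambda x.t)s\mapsto t[s/x]$; $\langle t,s\rangle\mathsf{tt}\mapsto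 t$; $\langle t,s\rangle\mathsf{ff}\mapsto s$; $\mathsf{tt}\langle t,s\rangle\mapsto t$; $\mathsf{ff}\langle t,s\rangle\mapsto s$; $\otimes_{\tau,\rho}ts(\lambda x^\tau.\lambda y^\rho.r)\mapsto r[t,s/x,y]$ (simultaneous substitution); $\mathsf{nil}_\tau\{t\}s\mapsto s$; $\mathsf{cons}_\tau d\,a\,\ell\{t\}s\mapsto t\,d\,a\,(\ell\{t\}s)$ provided $\ell$ is a list. The reduction relation $\to$ is inductively defined by: if $t\mapsto t'$ then $t\to t'$; if $t\to t'$ then $ts\to t's$; if $s\to s'$ then $ts\to ts'$ (so there is no reduction under $\lambda$, inside pairs $\langle\cdot,\cdot\rangle$, or inside braces $\{\cdot\}$). *)

theory Defs
  imports Main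
begin

datatype ty = TDia | TBool | TArr ty ty | TTens ty ty | TProd ty ty | TList ty

datatype const = CTt | CFf | CNil ty | CCons ty | CTens ty ty

fun ctype :: "const \<Rightarrow> ty" where
  "ctype CTt = TBool"
| "ctype CFf = TBool"
| "ctype (CNil \<tau>) = TList \<tau>"
| "ctype (CCons \<tau>) = TArr TDia (TArr \<tau> (TArr (TList \<tau>) (TList \<tau>)))"
| "ctype (CTens \<tau> \<rho>) = TArr \<tau> (TArr \<rho> (TTens \<tau> \<rho>))"

text \<open>Terms in locally nameless representation (alpha-equivalence classes of raw terms
  correspond to locally closed terms).\<close>
datatype trm = FVar nat ty | BVar nat | Const const | Lam ty trm | Pair trm trm
  | App trm trm | Brace trm

type_synonym var = "nat \<times> ty"
type_synonym ctx = "var set"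

fun fv :: "trm \<Rightarrow> var set" where
  "fv (FVar x \<tau>) = {(x, \<tau>)}"
| "fv (BVar i) = {}"
| "fv (Const c) = {}"
| "fv (Lam \<tau> t) = fv t"
| "fv (Pair t s) = fv t \<union> fv s"
| "fv (App t s) = fv t \<union> fv s"
| "fv (Brace t) = fv t"

fun opn :: "nat \<Rightarrow> trm \<Rightarrow> trm \<Rightarrow> trm" where
  "opn k u (FVar x \<tau>) = FVar x \<tau>"
| "opn k u (BVar i) = (if i = k then u else BVar i)"
| "opn k u (Const c) = Const c"
| "opn k u (Lam \<tau> t) = Lam \<tau> (opn (Suc k) u t)"
| "opn k u (Pair t s) = Pair (opn k u t) (opn k u s)"
| "opn k u (App t s) = App (opn k u t) (opn k u s)"
| "opn k u (Brace t) = Brace (opn k u t)"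

text \<open>Simultaneous opening: index Suc k (outer binder) by a, index k (inner binder) by b.\<close>
fun opn2 :: "nat \<Rightarrow> trm \<Rightarrow> trm \<Rightarrow> trm \<Rightarrow> trm" where
  "opn2 k a b (FVar x \<tau>) = FVar x \<tau>"
| "opn2 k a b (BVar i) = (if i = k then b else if i = Suc k then a else BVar i)"
| "opn2 k a b (Const c) = Const c"
| "opn2 k a b (Lam \<tau> t) = Lam \<tau> (opn2 (Suc k) a b t)"
| "opn2 k a b (Pair t s) = Pair (opn2 k a b t) (opn2 k a b s)"
| "opn2 k a b (App t s) = App (opn2 k a b t) (opn2 k a b s)"
| "opn2 k a b (Brace t) = Brace (opn2 k a b t)"

text \<open>Contexts are finite sets of typed variables;
  Gamma1,Gamma2 presupposes disjointness.  A lambda whose body is t is typed by choosing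
  a name for the bound variable not free in the abstraction (alpha-renaming).\<close>
inductive typing :: "ctx \<Rightarrow> trm \<Rightarrow> ty \<Rightarrow> bool" where
  T_Var: "finite \<Gamma> \<Longrightarrow> (x, \<tau>) \<notin> \<Gamma> \<Longrightarrow> typing (insert (x, \<tau>) \<Gamma>) (FVar x \<tau>) \<tau>"
| T_Const: "finite \<Gamma> \<Longrightarrow> typing \<Gamma> (Const c) (ctype c)"
| T_LamI: "(x, \<tau>) \<notin> fv t \<Longrightarrow> typing (\<Gamma> \<union> {(x, \<tau>)}) (opn 0 (FVar x \<tau>) t) \<rho>
     \<Longrightarrow> typing \<Gamma> (Lam \<tau> t) (TArr \<tau> \<rho>)"
| T_LamE: "typing \<Gamma>1 t (TArr \<tau> \<rho>) \<Longrightarrow> typing \<Gamma>2 s \<tau> \<Longrightarrow> \<Gamma>1 \<inter> \<Gamma>2 = {}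
     \<Longrightarrow> typing (\<Gamma>1 \<union> \<Gamma>2) (App t s) \<rho>"
| T_ProdI: "typing \<Gamma> t \<tau> \<Longrightarrow> typing \<Gamma> s \<rho> \<Longrightarrow> typing \<Gamma> (Pair t s) (TProd \<tau> \<rho>)"
| T_ProdE1: "typing \<Gamma> t (TProd \<tau> \<rho>) \<Longrightarrow> typing \<Gamma> (App t (Const CTt)) \<tau>"
| T_ProdE0: "typing \<Gamma> t (TProd \<tau> \<rho>) \<Longrightarrow> typing \<Gamma> (App t (Const CFf)) \<rho>"
| T_BoolE: "typing \<Gamma>1 t TBool \<Longrightarrow> typing \<Gamma>2 s \<tau> \<Longrightarrow> typing \<Gamma>2 r \<tau> \<Longrightarrow> \<Gamma>1 \<inter> \<Gamma>2 = {}
     \<Longrightarrow> typing (\<Gamma>1 \<union> \<Gamma>2) (App t (Pair s r)) \<tau>"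
| T_TensE: "typing \<Gamma>1 t (TTens \<tau> \<rho>) \<Longrightarrow>
     (x, \<tau>) \<notin> fv s \<Longrightarrow> (y, \<rho>) \<notin> fv s \<Longrightarrow> (x, \<tau>) \<noteq> (y, \<rho>) \<Longrightarrow>
     (x, \<tau>) \<notin> \<Gamma>2 \<Longrightarrow> (y, \<rho>) \<notin> \<Gamma>2 \<Longrightarrow>
     typing (\<Gamma>2 \<union> {(x, \<tau>), (y, \<rho>)}) (opn2 0 (FVar x \<tau>) (FVar y \<rho>) s) \<sigma> \<Longrightarrow>
     \<Gamma>1 \<inter> \<Gamma>2 = {} \<Longrightarrow>
     typing (\<Gamma>1 \<union> \<Gamma>2) (App t (Lam \<tau> (Lam \<rho> s))) \<sigma>"
| T_ListE: "typing \<Gamma> t (TList \<tau>) \<Longrightarrow> typing {} s (TArr TDia (TArr \<tau> (TArr \<rho> \<rho>)))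
     \<Longrightarrow> typing \<Gamma> (App t (Brace s)) (TArr \<rho> \<rho>)"

inductive is_list :: "ty \<Rightarrow> trm \<Rightarrow> bool" where
  "is_list \<tau> (Const (CNil \<tau>))"
| "is_list \<tau> l \<Longrightarrow> is_list \<tau> (App (App (App (Const (CCons \<tau>)) d) a) l)"

inductive conv :: "trm \<Rightarrow> trm \<Rightarrow> bool" where
  C_beta: "conv (App (Lam \<tau> t) s) (opn 0 s t)"
| C_pair1: "conv (App (Pair t s) (Const CTt)) t"
| C_pair0: "conv (App (Pair t s) (Const CFf)) s"
| C_if1: "conv (App (Const CTt) (Pair t s)) t"
| C_if0: "conv (App (Const CFf) (Pair t s)) s"
| C_tens: "conv (App (App (App (Const (CTens \<tau> \<rho>)) t) s) (Lam \<tau> (Lam \<rho> r))) (opn2 0 t s r)"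
| C_nil: "conv (App (App (Const (CNil \<tau>)) (Brace t)) s) s"
| C_cons: "is_list \<tau> l \<Longrightarrow>
    conv (App (App (App (App (App (Const (CCons \<tau>)) d) a) l) (Brace t)) s)
         (App (App (App t d) a) (App (App l (Brace t)) s))"

inductive red :: "trm \<Rightarrow> trm \<Rightarrow> bool" where
  R_conv: "conv t t' \<Longrightarrow> red t t'"
| R_appL: "red t t' \<Longrightarrow> red (App t s) (App t' s)"
| R_appR: "red s s' \<Longrightarrow> red (App t s) (App t s')"

end

theory Submission
  imports Defs "HOL-Combinatorics.Transposition"
begin

text \<open>Only two conversions substitute, beta and the tensor elimination; both are handled by a
substitution lemma, the other conversions need no more than inversion of the typing rules (the
step function of a list iteration is closed, so unfolding a cons cell just rebuilds a derivation).
Contexts may contain unused variables, so weakening holds; when a multiplicative rule splits its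
context, the variable being substituted lies in at most one part, and only that part receives the
context of the substituted term. The substitution lemma is proved by induction on the size of the
term rather than on the derivation, so that in the binder cases the bound variables can be renamed
apart from everything in sight: typing is invariant under transpositions of variable names.\<close>

fun lc_at :: "nat \<Rightarrow> trm \<Rightarrow> bool" where
  "lc_at n (FVar x \<tau>) = True"
| "lc_at n (BVar i) = (i < n)"
| "lc_at n (Const c) = True"
| "lc_at n (Lam \<tau> t) = lc_at (Suc n) t"
| "lc_at n (Pair t s) = (lc_at n t \<and> lc_at n s)"
| "lc_at n (App t s) = (lc_at n t \<and> lc_at n s)"
| "lc_at n (Brace t) = lc_at n t"

fun subst :: "var \<Rightarrow> trm \<Rightarrow> trm \<Rightarrow> trm" where
  "subst X s (FVar x \<tau>) = (if (x, \<tau>) = X then s else FVar x \<tau>)"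
| "subst X s (BVar i) = BVar i"
| "subst X s (Const c) = Const c"
| "subst X s (Lam \<tau> t) = Lam \<tau> (subst X s t)"
| "subst X s (Pair t u) = Pair (subst X s t) (subst X s u)"
| "subst X s (App t u) = App (subst X s t) (subst X s u)"
| "subst X s (Brace t) = Brace (subst X s t)"

fun rename :: "(var \<Rightarrow> var) \<Rightarrow> trm \<Rightarrow> trm" where
  "rename f (FVar x \<tau>) = case_prod FVar (f (x, \<tau>))"
| "rename f (BVar i) = BVar i"
| "rename f (Const c) = Const c"
| "rename f (Lam \<tau> t) = Lam \<tau> (rename f t)"
| "rename f (Pair t s) = Pair (rename f t) (rename f s)"
| "rename f (App t s) = App (rename f t) (rename f s)"
| "rename f (Brace t) = Brace (rename f t)"

lemma finite_fv [simp]: "finite (fv t)"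
  by (induction t) auto

lemma fv_rename: "fv (rename f t) = f ` fv t"
  by (induction t) (auto split: prod.split)

lemma rename_opn: "rename f (opn k u t) = opn k (rename f u) (rename f t)"
  by (induction t arbitrary: k) (auto split: prod.split)

lemma rename_opn2: "rename f (opn2 k a b t) = opn2 k (rename f a) (rename f b) (rename f t)"
  by (induction t arbitrary: k) (auto split: prod.split)

lemma rename_transpose_fresh: "X \<notin> fv t \<Longrightarrow> Z \<notin> fv t \<Longrightarrow> rename (transpose X Z) t = t"
  by (induction t) auto

lemma size_opn_FVar [simp]: "size (opn k (FVar x \<tau>) t) = size t"
  by (induction t arbitrary: k) auto

lemma size_opn2_FVar [simp]: "size (opn2 k (FVar x \<tau>) (FVar y \<rho>) t) = size t"
  by (induction t arbitrary: k) auto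

lemma fv_opn_superset: "fv t \<subseteq> fv (opn k u t)"
  by (induction t arbitrary: k) auto

lemma fv_opn2_superset: "fv t \<subseteq> fv (opn2 k a b t)"
  by (induction t arbitrary: k) auto

lemma lc_at_opn: "lc_at k (opn k u t) \<Longrightarrow> lc_at (Suc k) t"
  by (induction t arbitrary: k) (auto split: if_splits)

lemma lc_at_opn2: "lc_at k (opn2 k a b t) \<Longrightarrow> lc_at (Suc (Suc k)) t"
  by (induction t arbitrary: k) (auto split: if_splits)

lemma opn_lc_at: "lc_at n t \<Longrightarrow> n \<le> k \<Longrightarrow> opn k u t = t"
  by (induction t arbitrary: n k) auto

lemma opn2_lc_at: "lc_at n t \<Longrightarrow> n \<le> k \<Longrightarrow> opn2 k a b t = t"
  by (induction t arbitrary: n k) auto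

lemma subst_opn: "lc_at 0 s \<Longrightarrow> subst X s (opn k u t) = opn k (subst X s u) (subst X s t)"
  by (induction t arbitrary: k) (auto simp: opn_lc_at[of 0])

lemma subst_opn2:
  "lc_at 0 s \<Longrightarrow> subst X s (opn2 k a b t) = opn2 k (subst X s a) (subst X s b) (subst X s t)"
  by (induction t arbitrary: k) (auto simp: opn2_lc_at[of 0])

lemma subst_fresh: "X \<notin> fv t \<Longrightarrow> subst X s t = t"
  by (induction t) auto

lemma ex_fresh_var: "finite (A :: var set) \<Longrightarrow> \<exists>x. (x, \<tau>) \<notin> A"
  by (metis ex_new_if_finite finite_imageI image_eqI fst_conv infinite_UNIV_nat)

lemma fresh_var_pairE:
  assumes "finite (A :: var set)"
  obtains x y where "(x, \<tau>) \<notin> A" "(y, \<rho>) \<notin> A" "(x, \<tau>) \<noteq> (y, \<rho>)"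
  by (metis assms ex_fresh_var finite_insert insertCI)

inductive_cases typing_ConstE: "typing \<Gamma> (Const c) T"
inductive_cases typing_PairE: "typing \<Gamma> (Pair t s) T"
inductive_cases typing_AppE: "typing \<Gamma> (App t s) T"

lemma typing_finite: "typing \<Gamma> t \<tau> \<Longrightarrow> finite \<Gamma>"
  by (induction rule: typing.induct) auto

lemma typing_fv: "typing \<Gamma> t \<tau> \<Longrightarrow> fv t \<subseteq> \<Gamma>"
proof (induction rule: typing.induct)
  case (T_LamI x \<tau> t \<Gamma> \<rho>)
  then show ?case using fv_opn_superset[of t 0 "FVar x \<tau>"] by auto
next
  case (T_TensE \<Gamma>1 t \<tau> \<rho> x s y \<Gamma>2 \<sigma>)
  then show ?case using fv_opn2_superset[of s 0 "FVar x \<tau>" "FVar y \<rho>"] by auto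
qed auto

lemma typing_lc: "typing \<Gamma> t \<tau> \<Longrightarrow> lc_at 0 t"
  by (induction rule: typing.induct) (auto intro: lc_at_opn lc_at_opn2)

lemma typing_FVar: "finite \<Gamma> \<Longrightarrow> (x, \<tau>) \<in> \<Gamma> \<Longrightarrow> typing \<Gamma> (FVar x \<tau>) \<tau>"
  by (metis insert_Diff finite_Diff Diff_iff singletonI typing.T_Var)

lemma typing_mono: "typing \<Gamma> t \<tau> \<Longrightarrow> \<Gamma> \<subseteq> \<Gamma>' \<Longrightarrow> finite \<Gamma>' \<Longrightarrow> typing \<Gamma>' t \<tau>"
proof (induction arbitrary: \<Gamma>' rule: typing.induct)
  case (T_Var \<Gamma> x \<tau>)
  then show ?case by (intro typing_FVar) auto
next
  case (T_LamI x \<tau> t \<Gamma> \<rho>)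
  then show ?case by (intro typing.T_LamI) auto
next
  case (T_LamE \<Gamma>1 t \<tau> \<rho> \<Gamma>2 s)
  have "typing (\<Gamma>' - \<Gamma>2) t (TArr \<tau> \<rho>)"
    using T_LamE by (intro T_LamE.IH(1)) auto
  then have "typing ((\<Gamma>' - \<Gamma>2) \<union> \<Gamma>2) (App t s) \<rho>"
    using T_LamE by (intro typing.T_LamE) auto
  then show ?case using T_LamE.prems by (simp add: Un_absorb2)
next
  case (T_BoolE \<Gamma>1 t \<Gamma>2 s \<tau> r)
  have "typing ((\<Gamma>' - \<Gamma>2) \<union> \<Gamma>2) (App t (Pair s r)) \<tau>"
    using T_BoolE by (intro typing.T_BoolE T_BoolE.IH(1)) auto
  then show ?case using T_BoolE.prems by (simp add: Un_absorb2)
next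
  case (T_TensE \<Gamma>1 t \<tau> \<rho> x s y \<Gamma>2 \<sigma>)
  have "typing ((\<Gamma>' - \<Gamma>2) \<union> \<Gamma>2) (App t (Lam \<tau> (Lam \<rho> s))) \<sigma>"
    using T_TensE by (intro typing.T_TensE T_TensE.IH(1)) auto
  then show ?case using T_TensE.prems by (simp add: Un_absorb2)
qed (auto intro: typing.intros)

lemma typing_rename:
  assumes "typing \<Gamma> t \<rho>" and inj: "inj f" and f_snd: "\<And>v. snd (f v) = snd v"
  shows "typing (f ` \<Gamma>) (rename f t) \<rho>"
proof -
  have f_var: "\<exists>x'. f (x, \<tau>) = (x', \<tau>)" for x \<tau>
    using f_snd[of "(x, \<tau>)"] by (cases "f (x, \<tau>)") auto
  have f_mem: "f v \<in> f ` A \<longleftrightarrow> v \<in> A" for v A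
    by (rule inj_image_mem_iff[OF inj])
  from assms(1) show ?thesis
  proof (induction rule: typing.induct)
    case (T_Var \<Gamma> x \<tau>)
    obtain x' where fx: "f (x, \<tau>) = (x', \<tau>)" using f_var by blast
    have "(x', \<tau>) \<notin> f ` \<Gamma>" using T_Var(2) fx f_mem by metis
    with T_Var(1) fx show ?case by (simp add: typing.T_Var)
  next
    case (T_LamI x \<tau> t \<Gamma> \<rho>)
    obtain x' where fx: "f (x, \<tau>) = (x', \<tau>)" using f_var by blast
    have "(x', \<tau>) \<notin> fv (rename f t)" using T_LamI(1) fx f_mem by (metis fv_rename)
    with T_LamI(3) fx show ?case by (simp add: rename_opn image_Un typing.T_LamI)
  next
    case (T_TensE \<Gamma>1 t \<tau> \<rho> x s y \<Gamma>2 \<sigma>)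
    obtain x' y' where fx: "f (x, \<tau>) = (x', \<tau>)" and fy: "f (y, \<rho>) = (y', \<rho>)"
      using f_var by meson
    have "typing (f ` \<Gamma>1 \<union> f ` \<Gamma>2) (App (rename f t) (Lam \<tau> (Lam \<rho> (rename f s)))) \<sigma>"
    proof (rule typing.T_TensE[where x = x' and y = y'])
      show "(x', \<tau>) \<notin> fv (rename f s)" "(y', \<rho>) \<notin> fv (rename f s)"
        "(x', \<tau>) \<notin> f ` \<Gamma>2" "(y', \<rho>) \<notin> f ` \<Gamma>2"
        using T_TensE.hyps fx fy f_mem by (metis fv_rename)+
      show "(x', \<tau>) \<noteq> (y', \<rho>)"
        using T_TensE.hyps(4) fx fy inj by (metis injD)
    qed (use T_TensE fx fy in \<open>simp_all add: rename_opn2 image_Un flip: image_Int[OF inj]\<close>)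
    then show ?case by (simp add: image_Un)
  qed (simp_all add: image_Un typing.T_Const typing.T_LamE typing.T_ProdI typing.T_ProdE1
      typing.T_ProdE0 typing.T_BoolE typing.T_ListE flip: image_Int[OF inj])
qed

lemma typing_transpose:
  assumes "typing (insert X \<Gamma>) t \<rho>" "X \<notin> \<Gamma>" "Z \<notin> \<Gamma>" "snd Z = snd X"
  shows "typing (insert Z \<Gamma>) (rename (transpose X Z) t) \<rho>"
proof -
  have "snd (transpose X Z v) = snd v" for v
    using assms(4) by (simp add: transpose_def)
  from typing_rename[OF assms(1) inj_transpose this] show ?thesis
    using assms(2,3) by simp
qed

lemma typing_Lam_inv:
  assumes "typing \<Gamma> (Lam \<tau> t) T"
  obtains \<rho> where "T = TArr \<tau> \<rho>"
    and "\<And>z. (z, \<tau>) \<notin> \<Gamma> \<union> fv t \<Longrightarrow> typing (\<Gamma> \<union> {(z, \<tau>)}) (opn 0 (FVar z \<tau>) t) \<rho>"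
  using assms
proof cases
  case (T_LamI x \<rho>)
  \<comment> \<open>T_LamI does not require the bound name to be fresh for \<Gamma>, hence the detour via \<Gamma> - {(x, \<tau>)}.\<close>
  have "typing (\<Gamma> \<union> {(z, \<tau>)}) (opn 0 (FVar z \<tau>) t) \<rho>" if z: "(z, \<tau>) \<notin> \<Gamma> \<union> fv t" for z
  proof -
    let ?\<Gamma>' = "\<Gamma> - {(x, \<tau>)}"
    have "typing (insert (x, \<tau>) ?\<Gamma>') (opn 0 (FVar x \<tau>) t) \<rho>"
      using T_LamI(3) by simp
    from typing_transpose[OF this, of "(z, \<tau>)"]
    have "typing (insert (z, \<tau>) ?\<Gamma>') (opn 0 (FVar z \<tau>) t) \<rho>"
      using z T_LamI(2) by (simp add: rename_opn rename_transpose_fresh)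
    then show ?thesis
      by (rule typing_mono) (use typing_finite[OF assms] in auto)
  qed
  with T_LamI(1) show thesis by (rule that)
qed

lemma typing_tens_body_rename:
  assumes "typing (\<Gamma> \<union> {(x, \<tau>), (y, \<rho>)}) (opn2 0 (FVar x \<tau>) (FVar y \<rho>) s) \<sigma>"
    and "(x, \<tau>) \<notin> fv s" "(y, \<rho>) \<notin> fv s" "(x, \<tau>) \<noteq> (y, \<rho>)" "(x, \<tau>) \<notin> \<Gamma>" "(y, \<rho>) \<notin> \<Gamma>"
    and "(x', \<tau>) \<notin> \<Gamma> \<union> fv s \<union> {(x, \<tau>), (y, \<rho>)}"
      "(y', \<rho>) \<notin> \<Gamma> \<union> fv s \<union> {(x, \<tau>), (y, \<rho>)}" "(x', \<tau>) \<noteq> (y', \<rho>)"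
  shows "typing (\<Gamma> \<union> {(x', \<tau>), (y', \<rho>)}) (opn2 0 (FVar x' \<tau>) (FVar y' \<rho>) s) \<sigma>"
proof -
  have "typing (insert (x, \<tau>) (insert (y, \<rho>) \<Gamma>)) (opn2 0 (FVar x \<tau>) (FVar y \<rho>) s) \<sigma>"
    using assms(1) by simp
  from typing_transpose[OF this, of "(x', \<tau>)"]
  have "typing (insert (y, \<rho>) (insert (x', \<tau>) \<Gamma>)) (opn2 0 (FVar x' \<tau>) (FVar y \<rho>) s) \<sigma>"
    using assms(2-8) by (auto simp: rename_opn2 rename_transpose_fresh insert_commute)
  from typing_transpose[OF this, of "(y', \<rho>)"] show ?thesis
    using assms(2-9) by (auto simp: rename_opn2 rename_transpose_fresh insert_commute)
qed

lemma typing_LamI_cofinite: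
  assumes "finite L" and "\<And>z. (z, \<tau>) \<notin> L \<Longrightarrow> typing (\<Gamma> \<union> {(z, \<tau>)}) (opn 0 (FVar z \<tau>) t) \<rho>"
  shows "typing \<Gamma> (Lam \<tau> t) (TArr \<tau> \<rho>)"
proof -
  obtain z where "(z, \<tau>) \<notin> L \<union> fv t"
    using ex_fresh_var assms(1) by (meson finite_UnI finite_fv)
  then show ?thesis using assms(2) by (blast intro: typing.T_LamI)
qed

lemma typing_TensE_cofinite:
  assumes "typing \<Gamma>1 t (TTens \<tau> \<rho>)" "\<Gamma>1 \<inter> \<Gamma>2 = {}" "finite L"
    and body: "\<And>x y. (x, \<tau>) \<notin> L \<Longrightarrow> (y, \<rho>) \<notin> L \<Longrightarrow> (x, \<tau>) \<noteq> (y, \<rho>) \<Longrightarrow>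
      typing (\<Gamma>2 \<union> {(x, \<tau>), (y, \<rho>)}) (opn2 0 (FVar x \<tau>) (FVar y \<rho>) r) \<sigma>"
  shows "typing (\<Gamma>1 \<union> \<Gamma>2) (App t (Lam \<tau> (Lam \<rho> r))) \<sigma>"
proof -
  obtain x0 y0 where "(x0, \<tau>) \<notin> L" "(y0, \<rho>) \<notin> L" "(x0, \<tau>) \<noteq> (y0, \<rho>)"
    using assms(3) by (rule fresh_var_pairE)
  then have "finite \<Gamma>2"
    using typing_finite[OF body] by blast
  then have "finite (L \<union> \<Gamma>2 \<union> fv r)"
    using assms(3) by simp
  then obtain x y where "(x, \<tau>) \<notin> L \<union> \<Gamma>2 \<union> fv r" "(y, \<rho>) \<notin> L \<union> \<Gamma>2 \<union> fv r" "(x, \<tau>) \<noteq> (y, \<rho>)"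
    by (rule fresh_var_pairE)
  then show ?thesis
    using assms(1,2) body[of x y] by (intro typing.T_TensE) auto
qed

definition subst_ctx :: "var \<Rightarrow> ctx \<Rightarrow> ctx \<Rightarrow> ctx" where
  "subst_ctx X \<Delta> \<Gamma> = (if X \<in> \<Gamma> then (\<Gamma> - {X}) \<union> \<Delta> else \<Gamma>)"

lemma subst_ctx_Un:
  "\<Gamma>1 \<inter> \<Gamma>2 = {} \<Longrightarrow> subst_ctx X \<Delta> (\<Gamma>1 \<union> \<Gamma>2) = subst_ctx X \<Delta> \<Gamma>1 \<union> subst_ctx X \<Delta> \<Gamma>2"
  by (auto simp: subst_ctx_def)

lemma subst_ctx_disjoint:
  "\<Gamma>1 \<inter> \<Gamma>2 = {} \<Longrightarrow> (\<Gamma>1 \<union> \<Gamma>2 - {X}) \<inter> \<Delta> = {} \<Longrightarrow>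
   subst_ctx X \<Delta> \<Gamma>1 \<inter> subst_ctx X \<Delta> \<Gamma>2 = {}"
  by (auto simp: subst_ctx_def)

lemma subst_ctx_insert: "Z \<noteq> X \<Longrightarrow> subst_ctx X \<Delta> (insert Z \<Gamma>) = insert Z (subst_ctx X \<Delta> \<Gamma>)"
  by (auto simp: subst_ctx_def)

lemma finite_subst_ctx: "finite \<Gamma> \<Longrightarrow> finite \<Delta> \<Longrightarrow> finite (subst_ctx X \<Delta> \<Gamma>)"
  by (simp add: subst_ctx_def)

lemma typing_subst_ctx_FVar:
  assumes "typing \<Gamma> (FVar x \<tau>) \<rho>" and s: "typing \<Delta> s (snd X)"
  shows "typing (subst_ctx X \<Delta> \<Gamma>) (subst X s (FVar x \<tau>)) \<rho>"
  using assms(1)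
proof cases
  case (T_Var \<Gamma>0)
  have fin: "finite (subst_ctx X \<Delta> \<Gamma>)"
    using typing_finite[OF assms(1)] typing_finite[OF s] by (rule finite_subst_ctx)
  show ?thesis
  proof (cases "(x, \<tau>) = X")
    case True
    then have "\<Delta> \<subseteq> subst_ctx X \<Delta> \<Gamma>"
      using T_Var by (auto simp: subst_ctx_def)
    then show ?thesis using True T_Var typing_mono[OF s _ fin] by auto
  next
    case False
    then show ?thesis using T_Var fin by (auto simp: subst_ctx_def intro: typing_FVar)
  qed
qed

definition subst_preserves_typing :: "var \<Rightarrow> trm \<Rightarrow> ctx \<Rightarrow> trm \<Rightarrow> bool" where
  "subst_preserves_typing X s \<Delta> u \<longleftrightarrow>
     (\<forall>\<Gamma> \<rho>. typing \<Gamma> u \<rho> \<longrightarrow> (\<Gamma> - {X}) \<inter> \<Delta> = {} \<longrightarrow> typing (subst_ctx X \<Delta> \<Gamma>) (subst X s u) \<rho>)"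

lemma typing_subst_ctx_LamI:
  assumes "finite L" and body: "\<And>z. (z, \<tau>) \<notin> L \<Longrightarrow> typing (\<Gamma> \<union> {(z, \<tau>)}) (opn 0 (FVar z \<tau>) t) \<rho>"
    and s: "typing \<Delta> s (snd X)" and "(\<Gamma> - {X}) \<inter> \<Delta> = {}"
    and IH: "\<And>z. subst_preserves_typing X s \<Delta> (opn 0 (FVar z \<tau>) t)"
  shows "typing (subst_ctx X \<Delta> \<Gamma>) (subst X s (Lam \<tau> t)) (TArr \<tau> \<rho>)"
  unfolding subst.simps
proof (rule typing_LamI_cofinite[where L = "L \<union> \<Delta> \<union> {X}"])
  fix z assume z: "(z, \<tau>) \<notin> L \<union> \<Delta> \<union> {X}"
  have "typing (subst_ctx X \<Delta> (\<Gamma> \<union> {(z, \<tau>)})) (subst X s (opn 0 (FVar z \<tau>) t)) \<rho>"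
    using IH[of z] body[of z] z assms(4) unfolding subst_preserves_typing_def by blast
  then show "typing (subst_ctx X \<Delta> \<Gamma> \<union> {(z, \<tau>)}) (opn 0 (FVar z \<tau>) (subst X s t)) \<rho>"
    using z typing_lc[OF s] by (simp add: subst_ctx_insert subst_opn)
qed (use assms(1) typing_finite[OF s] in simp)

lemma typing_subst_ctx_TensE:
  assumes "typing \<Gamma>1 t (TTens \<tau> \<rho>)" "\<Gamma>1 \<inter> \<Gamma>2 = {}" "finite L"
    and body: "\<And>x y. (x, \<tau>) \<notin> L \<Longrightarrow> (y, \<rho>) \<notin> L \<Longrightarrow> (x, \<tau>) \<noteq> (y, \<rho>) \<Longrightarrow>
      typing (\<Gamma>2 \<union> {(x, \<tau>), (y, \<rho>)}) (opn2 0 (FVar x \<tau>) (FVar y \<rho>) r) \<sigma>"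
    and s: "typing \<Delta> s (snd X)" and disj: "(\<Gamma>1 \<union> \<Gamma>2 - {X}) \<inter> \<Delta> = {}"
    and IH: "subst_preserves_typing X s \<Delta> t"
      "\<And>x y. subst_preserves_typing X s \<Delta> (opn2 0 (FVar x \<tau>) (FVar y \<rho>) r)"
  shows "typing (subst_ctx X \<Delta> (\<Gamma>1 \<union> \<Gamma>2)) (subst X s (App t (Lam \<tau> (Lam \<rho> r)))) \<sigma>"
proof -
  have "typing (subst_ctx X \<Delta> \<Gamma>1 \<union> subst_ctx X \<Delta> \<Gamma>2)
      (App (subst X s t) (Lam \<tau> (Lam \<rho> (subst X s r)))) \<sigma>"
  proof (rule typing_TensE_cofinite[where L = "L \<union> \<Delta> \<union> {X}"])
    show "typing (subst_ctx X \<Delta> \<Gamma>1) (subst X s t) (TTens \<tau> \<rho>)"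
      using IH(1) assms(1) disj unfolding subst_preserves_typing_def by blast
    show "subst_ctx X \<Delta> \<Gamma>1 \<inter> subst_ctx X \<Delta> \<Gamma>2 = {}"
      using assms(2) disj by (rule subst_ctx_disjoint)
    fix x y assume x: "(x, \<tau>) \<notin> L \<union> \<Delta> \<union> {X}" and y: "(y, \<rho>) \<notin> L \<union> \<Delta> \<union> {X}"
      and xy: "(x, \<tau>) \<noteq> (y, \<rho>)"
    have "typing (subst_ctx X \<Delta> (\<Gamma>2 \<union> {(x, \<tau>), (y, \<rho>)}))
        (subst X s (opn2 0 (FVar x \<tau>) (FVar y \<rho>) r)) \<sigma>"
      using IH(2)[of x y] body[of x y] x y xy disj unfolding subst_preserves_typing_def by blast
    then show "typing (subst_ctx X \<Delta> \<Gamma>2 \<union> {(x, \<tau>), (y, \<rho>)})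
        (opn2 0 (FVar x \<tau>) (FVar y \<rho>) (subst X s r)) \<sigma>"
      using x y typing_lc[OF s] by (simp add: subst_ctx_insert subst_opn2)
  qed (use assms(3) typing_finite[OF s] in simp)
  then show ?thesis using assms(2) by (simp add: subst_ctx_Un)
qed

lemma subst_preserves_typing:
  assumes s: "typing \<Delta> s (snd X)"
  shows "subst_preserves_typing X s \<Delta> u"
proof (induction u rule: measure_induct_rule[of size])
  case (less u)
  have IH: "typing (subst_ctx X \<Delta> \<Gamma>') (subst X s v) \<rho>'"
    if "typing \<Gamma>' v \<rho>'" "size v < size u" "(\<Gamma>' - {X}) \<inter> \<Delta> = {}" for v \<Gamma>' \<rho>'
    using less.IH that unfolding subst_preserves_typing_def by blast
  show ?case
    unfolding subst_preserves_typing_def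
  proof (intro allI impI)
    fix \<Gamma> \<rho> assume ty: "typing \<Gamma> u \<rho>" and disj: "(\<Gamma> - {X}) \<inter> \<Delta> = {}"
    from ty show "typing (subst_ctx X \<Delta> \<Gamma>) (subst X s u) \<rho>"
    proof cases
      case (T_Var \<Gamma>0 x)
      then show ?thesis using typing_subst_ctx_FVar[OF ty[unfolded T_Var(2)] s] by simp
    next
      case (T_Const c)
      then show ?thesis using typing_finite[OF s] by (auto simp: subst_ctx_def intro: typing.T_Const)
    next
      case (T_LamI x \<tau> t)
      obtain \<rho>' where \<rho>: "\<rho> = TArr \<tau> \<rho>'" and body:
        "\<And>z. (z, \<tau>) \<notin> \<Gamma> \<union> fv t \<Longrightarrow> typing (\<Gamma> \<union> {(z, \<tau>)}) (opn 0 (FVar z \<tau>) t) \<rho>'"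
        using ty T_LamI(1) by (auto elim: typing_Lam_inv)
      have "subst_preserves_typing X s \<Delta> (opn 0 (FVar z \<tau>) t)" for z
        using less.IH T_LamI(1) by simp
      from typing_subst_ctx_LamI[where L = "\<Gamma> \<union> fv t", OF _ body s disj this]
      show ?thesis using typing_finite[OF ty] T_LamI(1) \<rho> by simp
    next
      case (T_LamE \<Gamma>1 t \<sigma> \<Gamma>2 s')
      have "typing (subst_ctx X \<Delta> \<Gamma>1 \<union> subst_ctx X \<Delta> \<Gamma>2) (subst X s u) \<rho>"
        using T_LamE disj by (auto intro!: typing.T_LamE IH subst_ctx_disjoint)
      then show ?thesis using T_LamE by (simp add: subst_ctx_Un)
    next
      case (T_BoolE \<Gamma>1 t \<Gamma>2 s1 r1)
      have "typing (subst_ctx X \<Delta> \<Gamma>1 \<union> subst_ctx X \<Delta> \<Gamma>2) (subst X s u) \<rho>"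
        using T_BoolE disj by (auto intro!: typing.T_BoolE IH subst_ctx_disjoint)
      then show ?thesis using T_BoolE by (simp add: subst_ctx_Un)
    next
      case (T_TensE \<Gamma>1 t \<tau> \<rho>' x r y \<Gamma>2)
      from typing_subst_ctx_TensE[where L = "\<Gamma>2 \<union> fv r \<union> {(x, \<tau>), (y, \<rho>')}",
          OF T_TensE(3,10) _ typing_tens_body_rename[OF T_TensE(9,4-8)] s disj[unfolded T_TensE(1)]]
      show ?thesis
        using T_TensE(1,2) less.IH typing_finite[OF T_TensE(9)] by simp
    next
      case (T_ListE t \<tau> s0 \<rho>')
      have "subst X s s0 = s0"
        using typing_fv[OF T_ListE(4)] by (simp add: subst_fresh)
      then show ?thesis using T_ListE disj by (auto intro!: typing.T_ListE IH)
    qed (use disj in \<open>auto intro!: typing.T_ProdI typing.T_ProdE1 typing.T_ProdE0 IH\<close>)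
  qed
qed

lemma typing_subst:
  assumes "typing (insert X \<Gamma>) u \<rho>" "typing \<Delta> s (snd X)" "X \<notin> \<Gamma>" "\<Gamma> \<inter> \<Delta> = {}"
  shows "typing (\<Gamma> \<union> \<Delta>) (subst X s u) \<rho>"
proof -
  have "(insert X \<Gamma> - {X}) \<inter> \<Delta> = {}"
    using assms(3,4) by auto
  then have "typing (subst_ctx X \<Delta> (insert X \<Gamma>)) (subst X s u) \<rho>"
    using subst_preserves_typing[OF assms(2)] assms(1) unfolding subst_preserves_typing_def by blast
  moreover have "subst_ctx X \<Delta> (insert X \<Gamma>) = \<Gamma> \<union> \<Delta>"
    using assms(3) by (auto simp: subst_ctx_def)
  ultimately show ?thesis by simp
qed

lemma typing_App_arrow_inv:
  assumes "typing \<Gamma> (App f s) T"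
    and "\<And>\<Gamma>' T'. typing \<Gamma>' f T' \<Longrightarrow> \<exists>a b. T' = TArr a b"
  obtains \<Gamma>1 \<Gamma>2 a where "\<Gamma> = \<Gamma>1 \<union> \<Gamma>2" "\<Gamma>1 \<inter> \<Gamma>2 = {}" "typing \<Gamma>1 f (TArr a T)" "typing \<Gamma>2 s a"
  using assms(1) by (elim typing_AppE) (use that assms(2) in fastforce)+

lemma typing_Const_App:
  assumes "typing \<Gamma> (App (Const c) d) T" "ctype c = TArr a b"
  shows "T = b \<and> typing \<Gamma> d a"
proof -
  obtain \<Gamma>1 \<Gamma>2 a' where \<Gamma>: "\<Gamma> = \<Gamma>1 \<union> \<Gamma>2" and c: "typing \<Gamma>1 (Const c) (TArr a' T)"
    and d: "typing \<Gamma>2 d a'"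
    using assms(1) by (rule typing_App_arrow_inv) (auto elim: typing_ConstE simp: assms(2))
  from c assms(2) have "a' = a" "T = b" "finite \<Gamma>1"
    by (auto elim: typing_ConstE)
  with \<Gamma> d show ?thesis
    by (auto intro: typing_mono dest: typing_finite)
qed

lemma typing_Const_App2:
  assumes "typing \<Gamma> (App (App (Const c) d) e) T" "ctype c = TArr a (TArr b r)"
  obtains \<Gamma>1 \<Gamma>2 where "T = r" "\<Gamma> = \<Gamma>1 \<union> \<Gamma>2" "\<Gamma>1 \<inter> \<Gamma>2 = {}" "typing \<Gamma>1 d a" "typing \<Gamma>2 e b"
proof -
  obtain \<Gamma>1 \<Gamma>2 b' where "\<Gamma> = \<Gamma>1 \<union> \<Gamma>2" "\<Gamma>1 \<inter> \<Gamma>2 = {}"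
    and cd: "typing \<Gamma>1 (App (Const c) d) (TArr b' T)" and "typing \<Gamma>2 e b'"
    using assms(1) by (rule typing_App_arrow_inv) (auto dest: typing_Const_App[OF _ assms(2)])
  with typing_Const_App[OF cd assms(2)] show thesis
    by (intro that) auto
qed

lemma typing_Const_App3:
  assumes "typing \<Gamma> (App (App (App (Const c) d) e) f) T" "ctype c = TArr a (TArr b (TArr r q))"
  obtains \<Gamma>1 \<Gamma>2 \<Gamma>3 where "T = q" "\<Gamma> = \<Gamma>1 \<union> \<Gamma>2 \<union> \<Gamma>3" "\<Gamma>1 \<inter> \<Gamma>2 = {}" "(\<Gamma>1 \<union> \<Gamma>2) \<inter> \<Gamma>3 = {}"
    "typing \<Gamma>1 d a" "typing \<Gamma>2 e b" "typing \<Gamma>3 f r"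
proof -
  obtain \<Gamma>12 \<Gamma>3 r' where "\<Gamma> = \<Gamma>12 \<union> \<Gamma>3" "\<Gamma>12 \<inter> \<Gamma>3 = {}"
    and cde: "typing \<Gamma>12 (App (App (Const c) d) e) (TArr r' T)" and "typing \<Gamma>3 f r'"
    using assms(1) by (rule typing_App_arrow_inv) (auto elim: typing_Const_App2[OF _ assms(2)])
  from cde assms(2) obtain \<Gamma>1 \<Gamma>2 where "TArr r' T = TArr r q" "\<Gamma>12 = \<Gamma>1 \<union> \<Gamma>2" "\<Gamma>1 \<inter> \<Gamma>2 = {}"
    "typing \<Gamma>1 d a" "typing \<Gamma>2 e b"
    by (rule typing_Const_App2)
  with \<open>\<Gamma> = \<Gamma>12 \<union> \<Gamma>3\<close> \<open>\<Gamma>12 \<inter> \<Gamma>3 = {}\<close> \<open>typing \<Gamma>3 f r'\<close> show thesis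
    by (intro that) auto
qed

lemma typing_Brace_inv:
  assumes "typing \<Gamma> (App h (Brace t)) T" and "\<And>\<Gamma>' T'. typing \<Gamma>' h T' \<Longrightarrow> T' = TList \<sigma>"
  obtains \<rho> where "T = TArr \<rho> \<rho>" "typing \<Gamma> h (TList \<sigma>)"
    "typing {} t (TArr TDia (TArr \<sigma> (TArr \<rho> \<rho>)))"
  using assms(1) by (elim typing_AppE) (use that assms(2) in fastforce)+

lemma typing_beta:
  assumes "typing \<Gamma> (App (Lam \<sigma> t) s) T"
  shows "typing \<Gamma> (opn 0 s t) T"
proof -
  obtain \<Gamma>1 \<Gamma>2 a where \<Gamma>: "\<Gamma> = \<Gamma>1 \<union> \<Gamma>2" "\<Gamma>1 \<inter> \<Gamma>2 = {}"
    and lam: "typing \<Gamma>1 (Lam \<sigma> t) (TArr a T)" and arg: "typing \<Gamma>2 s a"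
    using assms by (rule typing_App_arrow_inv) (auto elim: typing_Lam_inv)
  obtain a: "a = \<sigma>" and body:
    "\<And>z. (z, \<sigma>) \<notin> \<Gamma>1 \<union> fv t \<Longrightarrow> typing (insert (z, \<sigma>) \<Gamma>1) (opn 0 (FVar z \<sigma>) t) T"
    using lam by (rule typing_Lam_inv) auto
  obtain z where z: "(z, \<sigma>) \<notin> \<Gamma>1 \<union> fv t"
    using ex_fresh_var typing_finite[OF lam] by (meson finite_UnI finite_fv)
  have "typing (\<Gamma>1 \<union> \<Gamma>2) (subst (z, \<sigma>) s (opn 0 (FVar z \<sigma>) t)) T"
    using body[OF z] arg a z \<Gamma>(2) by (intro typing_subst) auto
  moreover have "subst (z, \<sigma>) s (opn 0 (FVar z \<sigma>) t) = opn 0 s t"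
    using typing_lc[OF arg] z by (simp add: subst_opn subst_fresh)
  ultimately show ?thesis using \<Gamma>(1) by simp
qed

lemma typing_tens_conv:
  assumes "typing \<Gamma> (App (App (App (Const (CTens \<tau> \<rho>)) t) s) (Lam \<tau> (Lam \<rho> r))) T"
  shows "typing \<Gamma> (opn2 0 t s r) T"
  using assms
proof cases
  case (T_LamE \<Gamma>1 \<tau>' \<Gamma>2)
  then show ?thesis by (auto elim: typing_Const_App2)
next
  case (T_TensE \<Gamma>1 x y \<Gamma>2)
  obtain \<Gamma>t \<Gamma>s where \<Gamma>1: "\<Gamma>1 = \<Gamma>t \<union> \<Gamma>s" "\<Gamma>t \<inter> \<Gamma>s = {}"
    and t: "typing \<Gamma>t t \<tau>" and s: "typing \<Gamma>s s \<rho>"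
    using T_TensE(2) by (rule typing_Const_App2) auto
  have "finite (\<Gamma> \<union> fv r \<union> {(x, \<tau>), (y, \<rho>)})"
    using typing_finite[OF assms] by simp
  then obtain x' y' where x': "(x', \<tau>) \<notin> \<Gamma> \<union> fv r \<union> {(x, \<tau>), (y, \<rho>)}"
    and y': "(y', \<rho>) \<notin> \<Gamma> \<union> fv r \<union> {(x, \<tau>), (y, \<rho>)}" and x'y': "(x', \<tau>) \<noteq> (y', \<rho>)"
    by (rule fresh_var_pairE)
  have "typing (\<Gamma>2 \<union> {(x', \<tau>), (y', \<rho>)}) (opn2 0 (FVar x' \<tau>) (FVar y' \<rho>) r) T"
    by (rule typing_tens_body_rename[OF T_TensE(8,3-7)]) (use T_TensE(1) x' y' x'y' in auto)
  then have "typing (insert (y', \<rho>) \<Gamma>2 \<union> \<Gamma>t) (subst (x', \<tau>) t (opn2 0 (FVar x' \<tau>) (FVar y' \<rho>) r)) T"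
    using t x' y' x'y' T_TensE(1,9) \<Gamma>1 by (intro typing_subst) (auto simp: insert_commute)
  then have "typing (insert (y', \<rho>) (\<Gamma>2 \<union> \<Gamma>t)) (opn2 0 t (FVar y' \<rho>) r) T"
    using typing_lc[OF t] x' x'y' by (auto simp: subst_opn2 subst_fresh)
  then have "typing (\<Gamma>2 \<union> \<Gamma>t \<union> \<Gamma>s) (subst (y', \<rho>) s (opn2 0 t (FVar y' \<rho>) r)) T"
    using s y' T_TensE(1,9) \<Gamma>1 by (intro typing_subst) auto
  moreover have "(y', \<rho>) \<notin> fv t"
    using typing_fv[OF t] y' T_TensE(1) \<Gamma>1 by auto
  then have "subst (y', \<rho>) s (opn2 0 t (FVar y' \<rho>) r) = opn2 0 t s r"
    using typing_lc[OF s] y' by (simp add: subst_opn2 subst_fresh)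
  ultimately show ?thesis using T_TensE(1) \<Gamma>1 by (simp add: Un_ac)
qed

lemma typing_nil_conv:
  assumes "typing \<Gamma> (App (App (Const (CNil \<sigma>)) (Brace t)) s) T"
  shows "typing \<Gamma> s T"
proof -
  have nil: "T' = TList \<sigma>" if "typing \<Gamma>' (Const (CNil \<sigma>)) T'" for \<Gamma>' T'
    using that by (auto elim: typing_ConstE)
  obtain \<Gamma>1 \<Gamma>2 a where "\<Gamma> = \<Gamma>1 \<union> \<Gamma>2" and it: "typing \<Gamma>1 (App (Const (CNil \<sigma>)) (Brace t)) (TArr a T)"
    and s: "typing \<Gamma>2 s a"
    using assms by (rule typing_App_arrow_inv) (auto elim: typing_Brace_inv nil)
  moreover have "a = T"
    using it by (rule typing_Brace_inv) (auto dest: nil)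
  ultimately show ?thesis
    using typing_mono[OF s _ typing_finite[OF assms]] by simp
qed

lemma typing_cons_conv:
  assumes "typing \<Gamma> (App (App (App (App (App (Const (CCons \<tau>)) d) a) l) (Brace t)) s) T"
  shows "typing \<Gamma> (App (App (App t d) a) (App (App l (Brace t)) s)) T"
proof -
  let ?cell = "App (App (App (Const (CCons \<tau>)) d) a) l"
  have cell: "T' = TList \<tau>" if "typing \<Gamma>' ?cell T'" for \<Gamma>' T'
    using that by (rule typing_Const_App3) auto
  obtain \<Gamma>1 \<Gamma>2 \<rho> where \<Gamma>: "\<Gamma> = \<Gamma>1 \<union> \<Gamma>2" "\<Gamma>1 \<inter> \<Gamma>2 = {}"
    and it: "typing \<Gamma>1 (App ?cell (Brace t)) (TArr \<rho> T)" and s: "typing \<Gamma>2 s \<rho>"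
    using assms by (rule typing_App_arrow_inv) (auto elim: typing_Brace_inv cell)
  obtain \<rho>_eq: "\<rho> = T" and cell1: "typing \<Gamma>1 ?cell (TList \<tau>)"
    and step: "typing {} t (TArr TDia (TArr \<tau> (TArr T T)))"
    using it by (rule typing_Brace_inv) (auto dest: cell)
  obtain \<Gamma>d \<Gamma>a \<Gamma>l where \<Gamma>1: "\<Gamma>1 = \<Gamma>d \<union> \<Gamma>a \<union> \<Gamma>l" "\<Gamma>d \<inter> \<Gamma>a = {}" "(\<Gamma>d \<union> \<Gamma>a) \<inter> \<Gamma>l = {}"
    and d: "typing \<Gamma>d d TDia" and a: "typing \<Gamma>a a \<tau>" and l: "typing \<Gamma>l l (TList \<tau>)"
    using cell1 by (rule typing_Const_App3) auto
  have "typing ({} \<union> \<Gamma>d) (App t d) (TArr \<tau> (TArr T T))"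
    by (rule typing.T_LamE[OF step d]) simp
  then have "typing ({} \<union> \<Gamma>d \<union> \<Gamma>a) (App (App t d) a) (TArr T T)"
    by (rule typing.T_LamE[OF _ a]) (use \<Gamma>1 in auto)
  moreover have "typing (\<Gamma>l \<union> \<Gamma>2) (App (App l (Brace t)) s) T"
    by (rule typing.T_LamE[OF typing.T_ListE[OF l step]]) (use s \<rho>_eq \<Gamma> \<Gamma>1 in auto)
  ultimately have "typing (({} \<union> \<Gamma>d \<union> \<Gamma>a) \<union> (\<Gamma>l \<union> \<Gamma>2))
      (App (App (App t d) a) (App (App l (Brace t)) s)) T"
    by (rule typing.T_LamE) (use \<Gamma> \<Gamma>1 in auto)
  then show ?thesis using \<Gamma> \<Gamma>1 by (simp add: Un_ac)
qed

lemma conv_preserves_typing: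
  assumes "conv u u'" and "typing \<Gamma> u T"
  shows "typing \<Gamma> u' T"
  using assms
proof induction
  case C_beta
  then show ?case by (rule typing_beta)
next
  case C_tens
  then show ?case by (rule typing_tens_conv)
next
  case C_nil
  then show ?case by (rule typing_nil_conv)
next
  case C_cons
  from C_cons.prems show ?case by (rule typing_cons_conv)
qed (auto elim!: typing_AppE typing_PairE typing_ConstE intro: typing_mono dest: typing_finite)

lemma red_App: "red t t' \<Longrightarrow> \<exists>f s. t = App f s"
  by (induction rule: red.induct) (auto elim: conv.cases)

lemma typing_App_fun_cong:
  assumes "typing \<Gamma> (App t s) T" and "\<And>\<Gamma>' T'. typing \<Gamma>' t T' \<Longrightarrow> typing \<Gamma>' t' T'"
  shows "typing \<Gamma> (App t' s) T"
  using assms(1) by cases (use typing.T_LamE[OF assms(2)] typing.T_ProdE1[OF assms(2)]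
    typing.T_ProdE0[OF assms(2)] typing.T_BoolE[OF assms(2)] typing.T_TensE[OF assms(2)]
    typing.T_ListE[OF assms(2)] in auto)

lemma typing_App_arg_cong:
  assumes "typing \<Gamma> (App t (App f a)) T" and "\<And>\<Gamma>' T'. typing \<Gamma>' (App f a) T' \<Longrightarrow> typing \<Gamma>' s' T'"
  shows "typing \<Gamma> (App t s') T"
  using assms(1) by cases (use typing.T_LamE[OF _ assms(2)] in auto)

theorem lemma3p5:
  assumes "typing \<Gamma> t \<tau>" and "red t t'"
  shows "typing \<Gamma> t' \<tau>"
  using assms(2,1)
proof (induction arbitrary: \<Gamma> \<tau> rule: red.induct)
  case (R_conv t t')
  then show ?case by (rule conv_preserves_typing)
next
  case (R_appL t t' s)
  show ?case by (rule typing_App_fun_cong[OF R_appL.prems R_appL.IH])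
next
  case (R_appR s s' t)
  obtain f a where "s = App f a"
    using red_App[OF R_appR.hyps] by blast
  with R_appR.prems R_appR.IH show ?case by (blast intro: typing_App_arg_cong)
qed

end
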